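(* Fix $k\in\mathbb{Z}_{\geq 1}$ and $m\geq k$. The map $W_k$, from $\mathrm{Av}_m(312)$ to the set of walks of size $m-k+1$ in the overlap graph $\mathcal{O}v(k,\mathrm{Av}(312))$, is surjective.
   Context: For $n\ge1$, $\mathcal S_n$ is the set of permutations of $[n]$; by convention $\mathrm{Av}_0(B)$ consists of the empty permutation. For $I=\{i_1<\dots<i_m\}$, $\mathrm{pat}_I(\sigma)$ is the unique permutation whose entries are in the same relative order as $\sigma(i_1),\dots,\sigma(i_m)$. $\sigma$ avoids $\pi$ if no $I$ has $\mathrm{pat}_I(\sigma)=\pi$; $\mathrm{Av}_n(B)$ is the set of size-$n$ permutations avoiding all elements of $B$. Overlap graph: $\mathcal{O}v(k,\mathrm{Av}(B))$ is the directed multigraph with vertex set $\mathrm{Av}_{k-1}(B)$ and, for each $\pi\in\mathrm{Av}_k(B)$, one edge labelled $\pi$ from $\mathrm{pat}_{\{1,\dots,k-1\}}(\pi)$ to $\mathrm{pat}_{\{2,\dots,k\}}(\pi)$. A walk of size $s$ is a sequence of $s$ edges $(e_1,\dots,e_s)$ with the arrival vertex of $e_i$ equal to the start vertex of $e_{i+1}$. For $\sigma\in\mathrm{Av}_m(B)$ with $m\ge k$, $W_k(\sigma)=(e_1,\dots,e_{m-k+1})$ where $e_i$ is the edge labelled $\mathrm{pat}_{\{i,i+1,\dots,i+k-1\}}(\sigma)$; this is a walk in $\mathcal{O}v(k,\mathrm{Av}(B))$. *)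

theory Defs
  imports Main
begin

text \<open>Permutations of [n] are represented as lists (one-line notation) of length n
  containing each of 1..n exactly once.  List positions are 0-based internally.\<close>

definition is_perm :: "nat list \<Rightarrow> bool" where
  "is_perm xs \<longleftrightarrow> distinct xs \<and> set xs = {1..length xs}"

definition std :: "nat list \<Rightarrow> nat list" where
  "std xs = map (\<lambda>x. card {y \<in> set xs. y \<le> x}) xs"

definition pat :: "nat set \<Rightarrow> nat list \<Rightarrow> nat list" where
  "pat I \<sigma> = std (nths \<sigma> I)"

definition avoids :: "nat list \<Rightarrow> nat list \<Rightarrow> bool" where
  "avoids \<sigma> \<pi> \<longleftrightarrow> \<not> (\<exists>I. I \<subseteq> {..<length \<sigma>} \<and> pat I \<sigma> = \<pi>)"

definition Av :: "nat \<Rightarrow> nat list set \<Rightarrow> nat list set" where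
  "Av n B = {\<sigma>. length \<sigma> = n \<and> is_perm \<sigma> \<and> (\<forall>\<pi>\<in>B. avoids \<sigma> \<pi>)}"

text \<open>Overlap graph Ov(k, Av(B)): vertices Av_{k-1}(B); one edge labelled pi for each
  pi in Av_k(B), from pat_{1..k-1}(pi) to pat_{2..k}(pi).  Edges are identified with labels.\<close>
definition ov_start :: "nat \<Rightarrow> nat list \<Rightarrow> nat list" where
  "ov_start k \<pi> = pat {0..<k-1} \<pi>"

definition ov_end :: "nat \<Rightarrow> nat list \<Rightarrow> nat list" where
  "ov_end k \<pi> = pat {1..<k} \<pi>"

definition ov_walks :: "nat \<Rightarrow> nat list set \<Rightarrow> nat \<Rightarrow> nat list list set" where
  "ov_walks k B s = {es. length es = s \<and> (\<forall>e\<in>set es. e \<in> Av k B) \<and>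
      (\<forall>i. Suc i < s \<longrightarrow> ov_end k (es ! i) = ov_start k (es ! Suc i))}"

definition W :: "nat \<Rightarrow> nat list \<Rightarrow> nat list list" where
  "W k \<sigma> = map (\<lambda>i. pat {i..<i+k} \<sigma>) [0..<length \<sigma> - k + 1]"

end

theory Submission
  imports Defs
begin

text \<open>
  Walks are realised by induction on their size, appending one entry at a time. Let \<open>\<sigma>\<close>
  avoid 312 and realise a walk whose next edge \<open>e\<close> begins with the pattern of the last \<open>k - 1\<close>
  entries of \<open>\<sigma>\<close>. Append a new last value \<open>x\<close>, raising the values \<open>\<ge> x\<close> by one, where \<open>x\<close> is
  the smallest of those \<open>k - 1\<close> entries that \<open>e\<close> places above its last entry (or \<open>n + 1\<close> if there
  is none). The last window then has pattern \<open>e\<close>. A 312 ending at the new entry either lies in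
  that window, contradicting that \<open>e\<close> avoids 312, or starts before it; in the latter case the
  entry of value \<open>x\<close> in the window, which the pattern's "3" exceeds, completes a 312 either
  in \<open>\<sigma>\<close> or in the window.
\<close>

subsection \<open>Standardization and order isomorphism\<close>

definition rank :: "nat list \<Rightarrow> nat \<Rightarrow> nat" where
  "rank xs y = card {z \<in> set xs. z \<le> y}"

lemma std_conv_rank: "std xs = map (rank xs) xs"
  by (simp add: std_def rank_def)

lemma length_std [simp]: "length (std xs) = length xs"
  by (simp add: std_def)

lemma strict_mono_on_rank: "strict_mono_on (set xs) (rank xs)"
proof (rule strict_mono_onI)
  fix y y' assume "y \<in> set xs" "y' \<in> set xs" "y < y'"
  then have "{z \<in> set xs. z \<le> y} \<subset> {z \<in> set xs. z \<le> y'}"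
    by (auto intro!: psubsetI dest!: equalityD2)
  then show "rank xs y < rank xs y'"
    by (simp add: rank_def psubset_card_mono)
qed

lemma std_map_strict_mono_on:
  assumes "strict_mono_on (set xs) f"
  shows "std (map f xs) = std xs"
proof -
  have "rank (map f xs) (f y) = rank xs y" if "y \<in> set xs" for y
  proof -
    have "{z \<in> set (map f xs). z \<le> f y} = f ` {z \<in> set xs. z \<le> y}"
      using strict_mono_on_less_eq[OF assms _ that] by auto
    moreover have "inj_on f {z \<in> set xs. z \<le> y}"
      using strict_mono_on_imp_inj_on[OF assms] by (rule inj_on_subset) auto
    ultimately show ?thesis
      by (simp add: rank_def card_image)
  qed
  then show ?thesis
    by (simp add: std_conv_rank)
qed

lemma std_drop_std: "std (drop t (std xs)) = std (drop t xs)"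
proof -
  have "strict_mono_on (set (drop t xs)) (rank xs)"
    using strict_mono_on_rank by (rule monotone_on_subset) (rule set_drop_subset)
  then have "std (map (rank xs) (drop t xs)) = std (drop t xs)"
    by (rule std_map_strict_mono_on)
  then show ?thesis
    by (simp only: std_conv_rank[of xs] drop_map)
qed

lemma std_nth_less_iff:
  assumes "i < length xs" "j < length xs"
  shows "std xs ! i < std xs ! j \<longleftrightarrow> xs ! i < xs ! j"
  using assms by (simp add: std_conv_rank strict_mono_on_less[OF strict_mono_on_rank])

lemma std_is_perm: "is_perm xs \<Longrightarrow> std xs = xs"
proof -
  assume "is_perm xs"
  then have "{z \<in> set xs. z \<le> y} = {1..y}" if "y \<in> set xs" for y
    using that by (auto simp: is_perm_def)
  then have "rank xs y = y" if "y \<in> set xs" for y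
    using that by (simp add: rank_def)
  then show "std xs = xs"
    by (simp add: std_conv_rank map_idI)
qed

lemma pat_interval: "pat {i..<i+k} xs = std (take k (drop i xs))"
proof -
  have "{i..<i+k} = (+) i ` {..<k}"
  proof (auto simp: image_def)
    fix x assume "i \<le> x" "x < i + k"
    then show "\<exists>y\<in>{..<k}. x = i + y"
      by (intro bexI[of _ "x - i"]) auto
  qed
  then show ?thesis
    by (simp add: pat_def flip: nths_drop)
qed

lemma nths_conv_map_filter: "nths xs I = map (nth xs) (filter (\<lambda>i. i \<in> I) [0..<length xs])"
  by (induct xs rule: rev_induct) (auto simp: nths_append nth_append)

definition order_isomorphic :: "'a::linorder list \<Rightarrow> 'b::linorder list \<Rightarrow> bool" where
  "order_isomorphic xs ys \<longleftrightarrow> length xs = length ys \<and>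
     (\<forall>i<length xs. \<forall>j<length xs. xs ! i < xs ! j \<longleftrightarrow> ys ! i < ys ! j)"

lemma order_isomorphic_std: "order_isomorphic xs (std xs)"
  by (simp add: order_isomorphic_def std_nth_less_iff)

lemma order_isomorphic_sym: "order_isomorphic xs ys \<Longrightarrow> order_isomorphic ys xs"
  by (auto simp: order_isomorphic_def)

lemma order_isomorphic_trans:
  "order_isomorphic xs ys \<Longrightarrow> order_isomorphic ys zs \<Longrightarrow> order_isomorphic xs zs"
  by (auto simp: order_isomorphic_def)

lemma std_eq_imp_order_isomorphic: "std xs = std ys \<Longrightarrow> order_isomorphic xs ys"
  by (metis order_isomorphic_std order_isomorphic_sym order_isomorphic_trans)

lemma order_isomorphic_imp_std_eq:
  assumes "order_isomorphic xs ys" "distinct xs"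
  shows "std xs = std ys"
proof -
  define f where "f y = ys ! (THE i. i < length xs \<and> xs ! i = y)" for y
  have f_nth: "f (xs ! i) = ys ! i" if "i < length xs" for i
  proof -
    have "(THE j. j < length xs \<and> xs ! j = xs ! i) = i"
      using that assms(2) by (auto simp: nth_eq_iff_index_eq)
    then show ?thesis
      by (simp add: f_def)
  qed
  have "map f xs = ys"
    using assms(1) by (auto simp: order_isomorphic_def f_nth intro: nth_equalityI)
  moreover have "strict_mono_on (set xs) f"
    using assms(1) by (auto simp: strict_mono_on_def order_isomorphic_def in_set_conv_nth f_nth)
  ultimately show ?thesis
    using std_map_strict_mono_on by metis
qed

lemma order_isomorphic_snoc:
  assumes "order_isomorphic xs ys"
    and "\<And>i. i < length xs \<Longrightarrow> (xs ! i < a \<longleftrightarrow> ys ! i < b) \<and> (a < xs ! i \<longleftrightarrow> b < ys ! i)"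
  shows "order_isomorphic (xs @ [a]) (ys @ [b])"
  using assms by (auto simp: order_isomorphic_def nth_append less_Suc_eq)

subsection \<open>Avoiding 312\<close>

definition avoids_312 :: "'a::linorder list \<Rightarrow> bool" where
  "avoids_312 xs \<longleftrightarrow>
     \<not> (\<exists>i j l. i < j \<and> j < l \<and> l < length xs \<and> xs ! j < xs ! l \<and> xs ! l < xs ! i)"

lemma avoids_312_order_isomorphic:
  "order_isomorphic xs ys \<Longrightarrow> avoids_312 xs \<Longrightarrow> avoids_312 ys"
  unfolding avoids_312_def order_isomorphic_def by (metis less_trans)

lemma std_312:
  assumes "b < c" "c < a"
  shows "std [a, b, c] = [3, 1, 2]"
proof -
  have "{y \<in> set [a, b, c]. y \<le> a} = {a, b, c}" "{y \<in> set [a, b, c]. y \<le> b} = {b}"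
    "{y \<in> set [a, b, c]. y \<le> c} = {b, c}"
    using assms by auto
  then show ?thesis
    using assms by (simp add: std_def)
qed

lemma filter_mem_upt_3:
  assumes "i < j" "j < l" "l < n"
  shows "filter (\<lambda>t. t \<in> {i, j, l}) [0..<n] = [i, j, l]"
proof (rule sorted_distinct_set_unique)
  show "sorted (filter (\<lambda>t. t \<in> {i, j, l}) [0..<n])"
    using sorted_filter[of id "[0..<n]"] by simp
  show "sorted [i, j, l]" "distinct [i, j, l]"
    using assms by auto
  show "set (filter (\<lambda>t. t \<in> {i, j, l}) [0..<n]) = set [i, j, l]"
    using assms by auto
qed simp

lemma avoids_iff_avoids_312: "avoids xs [3, 1, 2] \<longleftrightarrow> avoids_312 xs"
proof
  assume "avoids xs [3, 1, 2]"
  show "avoids_312 xs"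
  proof (unfold avoids_312_def, clarify)
    fix i j l assume *: "i < j" "j < l" "l < length xs" "xs ! j < xs ! l" "xs ! l < xs ! i"
    then have "pat {i, j, l} xs = [3, 1, 2]"
      unfolding pat_def nths_conv_map_filter by (simp only: filter_mem_upt_3 list.map std_312)
    moreover have "{i, j, l} \<subseteq> {..<length xs}"
      using * by auto
    ultimately show False
      using \<open>avoids xs [3, 1, 2]\<close> unfolding avoids_def by blast
  qed
next
  assume "avoids_312 xs"
  show "avoids xs [3, 1, 2]"
  proof (unfold avoids_def, clarify)
    fix I assume "I \<subseteq> {..<length xs}" "pat I xs = [3, 1, 2]"
    define L where "L = filter (\<lambda>t. t \<in> I) [0..<length xs]"
    have std_ys: "std (map (nth xs) L) = [3, 1, 2]"
      using \<open>pat I xs = [3, 1, 2]\<close> by (simp add: pat_def nths_conv_map_filter L_def)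
    have L3: "length L = 3"
      using arg_cong[OF std_ys, of length] by (simp only: length_std length_map) simp
    have "xs ! (L ! 1) < xs ! (L ! 2)" "xs ! (L ! 2) < xs ! (L ! 0)"
      using std_nth_less_iff[of 1 "map (nth xs) L" 2] std_nth_less_iff[of 2 "map (nth xs) L" 0]
      by (simp_all add: std_ys L3)
    moreover have "sorted_wrt (<) L"
      by (simp add: L_def sorted_wrt_filter)
    then have "L ! 0 < L ! 1" "L ! 1 < L ! 2"
      using L3 by (simp_all add: sorted_wrt_iff_nth_less)
    moreover have "L ! 2 < length xs"
      using nth_mem[of 2 L] L3 by (simp add: L_def)
    ultimately show False
      using \<open>avoids_312 xs\<close> unfolding avoids_312_def by blast
  qed
qed

lemma Av_312_iff: "\<sigma> \<in> Av n {[3, 1, 2]} \<longleftrightarrow> length \<sigma> = n \<and> is_perm \<sigma> \<and> avoids_312 \<sigma>"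
  by (simp add: Av_def flip: avoids_iff_avoids_312)

subsection \<open>Windows and the overlap graph\<close>

lemma W_map_strict_mono: "strict_mono f \<Longrightarrow> W k (map f xs) = W k xs"
  by (simp add: W_def pat_def nths_map std_map_strict_mono_on monotone_on_subset[OF _ subset_UNIV])

lemma W_length_eq: "length xs = k \<Longrightarrow> W k xs = [std xs]"
  by (simp add: W_def pat_interval)

lemma last_W: "k \<le> length xs \<Longrightarrow> last (W k xs) = std (drop (length xs - k) xs)"
  by (simp add: W_def pat_interval)

lemma W_snoc:
  assumes "k \<le> length xs"
  shows "W k (xs @ [a]) = W k xs @ [std (drop (Suc (length xs) - k) (xs @ [a]))]"
proof -
  have "[0..<length (xs @ [a]) - k + 1] = [0..<length xs - k + 1] @ [Suc (length xs) - k]"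
    using assms by (simp add: Suc_diff_le)
  moreover have "pat {i..<i+k} (xs @ [a]) = pat {i..<i+k} xs" if "i + k \<le> length xs" for i
    using that by (simp add: pat_interval)
  ultimately show ?thesis
    using assms by (simp add: W_def pat_interval)
qed

lemma ov_start_eq: "ov_start k \<pi> = std (take (k - 1) \<pi>)"
  using pat_interval[of 0 "k - 1" \<pi>] by (simp add: ov_start_def)

lemma ov_end_eq: "length \<pi> = k \<Longrightarrow> ov_end k \<pi> = std (drop 1 \<pi>)"
  using pat_interval[of 1 "k - 1" \<pi>] by (cases k) (simp_all add: ov_end_def pat_def)

subsection \<open>Appending a value to a permutation\<close>

definition bump :: "nat \<Rightarrow> nat \<Rightarrow> nat" where
  "bump x y = (if x \<le> y then Suc y else y)"

definition append_value :: "nat \<Rightarrow> nat list \<Rightarrow> nat list" where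
  "append_value x \<sigma> = map (bump x) \<sigma> @ [x]"

lemma strict_mono_bump: "strict_mono (bump x)"
  by (rule strict_monoI) (auto simp: bump_def)

lemma bump_less_iff: "bump x y < x \<longleftrightarrow> y < x"
  by (auto simp: bump_def)

lemma less_bump_iff: "x < bump x y \<longleftrightarrow> x \<le> y"
  by (auto simp: bump_def)

lemma bump_image_interval:
  assumes "1 \<le> x" "x \<le> Suc n"
  shows "bump x ` {1..n} = {1..Suc n} - {x}"
proof
  show "bump x ` {1..n} \<subseteq> {1..Suc n} - {x}"
    by (auto simp: bump_def)
  show "{1..Suc n} - {x} \<subseteq> bump x ` {1..n}"
  proof
    fix z assume z: "z \<in> {1..Suc n} - {x}"
    show "z \<in> bump x ` {1..n}"
    proof (cases "z < x")
      case True
      then show ?thesis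
        using z assms by (auto simp: bump_def image_iff intro!: bexI[of _ z])
    next
      case False
      then show ?thesis
        using z assms by (auto simp: bump_def image_iff intro!: bexI[of _ "z - 1"])
    qed
  qed
qed

lemma is_perm_append_value:
  assumes "is_perm \<sigma>" "1 \<le> x" "x \<le> Suc (length \<sigma>)"
  shows "is_perm (append_value x \<sigma>)"
proof -
  have "distinct (map (bump x) \<sigma>)" "x \<notin> bump x ` set \<sigma>"
    using assms(1) strict_mono_bump[of x]
    by (auto simp: is_perm_def distinct_map strict_mono_eq inj_on_def bump_def)
  moreover have "insert x (bump x ` {1..length \<sigma>}) = {1..Suc (length \<sigma>)}"
    using bump_image_interval[OF assms(2,3)] assms(2,3) by auto
  ultimately show ?thesis
    using assms(1) by (simp add: is_perm_def append_value_def)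
qed

lemma exists_threshold:
  fixes v :: "nat list" and u :: "'a::linorder list"
  assumes iso: "order_isomorphic v u" and bound: "set v \<subseteq> {..N}"
  shows "\<exists>x \<in> insert (Suc N) (set v). \<forall>j<length v. x \<le> v ! j \<longleftrightarrow> c < u ! j"
proof (cases "\<exists>j<length v. c < u ! j")
  case False
  have "\<not> Suc N \<le> v ! j" if "j < length v" for j
    using bound nth_mem[OF that] by auto
  then show ?thesis
    using False by blast
next
  case True
  define J where "J = {j. j < length v \<and> c < u ! j}"
  have "finite J" "J \<noteq> {}"
    using True by (auto simp: J_def)
  then have "Min ((!) v ` J) \<in> (!) v ` J"
    by simp
  then obtain j0 where j0_in: "j0 \<in> J" and j0_min: "Min ((!) v ` J) = v ! j0"
    by blast
  have j0: "j0 \<in> J" "\<forall>j\<in>J. v ! j0 \<le> v ! j"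
    using j0_in \<open>finite J\<close> by (auto simp flip: j0_min intro!: Min_le)
  have "v ! j0 \<le> v ! j \<longleftrightarrow> c < u ! j" if "j < length v" for j
  proof
    assume "v ! j0 \<le> v ! j"
    moreover have "j0 < length v"
      using j0(1) by (simp add: J_def)
    ultimately have "\<not> u ! j < u ! j0"
      using iso that unfolding order_isomorphic_def by (metis leD)
    then show "c < u ! j"
      using j0(1) by (auto simp: J_def)
  next
    assume "c < u ! j"
    then show "v ! j0 \<le> v ! j"
      using j0(2) that by (simp add: J_def)
  qed
  moreover have "v ! j0 \<in> set v"
    using j0(1) by (simp add: J_def)
  ultimately show ?thesis
    by blast
qed

lemma order_isomorphic_append_value:
  fixes u :: "'a::linorder list"
  assumes iso: "order_isomorphic v u" and "c \<notin> set u"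
    and threshold: "\<forall>j<length v. x \<le> v ! j \<longleftrightarrow> c < u ! j"
  shows "order_isomorphic (map (bump x) v @ [x]) (u @ [c])"
proof (rule order_isomorphic_snoc)
  show "order_isomorphic (map (bump x) v) u"
    using iso strict_mono_less[OF strict_mono_bump] by (simp add: order_isomorphic_def)
  fix i assume "i < length (map (bump x) v)"
  moreover have "u ! i \<noteq> c"
    using \<open>c \<notin> set u\<close> calculation iso by (auto simp: order_isomorphic_def)
  ultimately show "(map (bump x) v ! i < x \<longleftrightarrow> u ! i < c) \<and> (x < map (bump x) v ! i \<longleftrightarrow> c < u ! i)"
    using threshold[rule_format, of i] by (auto simp: bump_less_iff less_bump_iff)
qed

lemma avoids_312_append_value:
  assumes avoids: "avoids_312 \<sigma>" and "distinct \<sigma>"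
    and window: "avoids_312 (drop s (append_value x \<sigma>))"
    and x: "x \<in> set (drop s \<sigma>) \<or> (\<forall>y\<in>set \<sigma>. y < x)"
  shows "avoids_312 (append_value x \<sigma>)"
proof -
  define n where "n = length \<sigma>"
  define \<tau> where "\<tau> = append_value x \<sigma>"
  have \<tau>_nth: "\<tau> ! i = bump x (\<sigma> ! i)" if "i < n" for i
    using that by (simp add: \<tau>_def append_value_def n_def nth_append)
  have \<tau>_last: "\<tau> ! n = x" and length_\<tau>: "length \<tau> = Suc n"
    by (simp_all add: \<tau>_def append_value_def n_def nth_append)
  have no_312_ending_in_window:
    "\<not> (s \<le> a \<and> a < b \<and> b < n \<and> \<tau> ! b < x \<and> x < \<tau> ! a)" for a b
  proof
    assume ab: "s \<le> a \<and> a < b \<and> b < n \<and> \<tau> ! b < x \<and> x < \<tau> ! a"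
    then have "a - s < b - s \<and> b - s < n - s \<and> n - s < length (drop s \<tau>) \<and>
        drop s \<tau> ! (b - s) < drop s \<tau> ! (n - s) \<and> drop s \<tau> ! (n - s) < drop s \<tau> ! (a - s)"
      using length_\<tau> \<tau>_last by auto
    then show False
      using window unfolding \<tau>_def[symmetric] avoids_312_def by blast
  qed
  show ?thesis
    unfolding \<tau>_def[symmetric] avoids_312_def
  proof clarify
    fix i j l assume ijl: "i < j" "j < l" "l < length \<tau>" "\<tau> ! j < \<tau> ! l" "\<tau> ! l < \<tau> ! i"
    show False
    proof (cases "l < n")
      case True
      then show False
        using avoids ijl by (simp add: avoids_312_def n_def \<tau>_nth strict_mono_less[OF strict_mono_bump])
    next
      case False
      then have "l = n" "j < n"
        using ijl length_\<tau> by auto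
      then have \<tau>i: "x < \<tau> ! i" and \<tau>j: "\<tau> ! j < x"
        using ijl \<tau>_last by auto
      then have \<sigma>i: "x \<le> \<sigma> ! i" and \<sigma>j: "\<sigma> ! j < x"
        using \<open>j < n\<close> ijl(1) \<tau>_nth by (simp_all add: less_bump_iff bump_less_iff)
      show False
      proof (cases "s \<le> i")
        case True
        then show False
          using no_312_ending_in_window ijl(1) \<open>j < n\<close> \<tau>i \<tau>j by blast
      next
        case False
        have "\<sigma> ! i \<in> set \<sigma>"
          using ijl(1) \<open>j < n\<close> by (simp add: n_def)
        then have "x \<in> set (drop s \<sigma>)"
          using x \<sigma>i by (auto dest: leD)
        then obtain q where "q < length (drop s \<sigma>)" "drop s \<sigma> ! q = x"
          by (auto simp: in_set_conv_nth)
        then have p: "s \<le> s + q" "s + q < n" "\<sigma> ! (s + q) = x"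
          by (simp_all add: n_def)
        have "\<sigma> ! (s + q) \<noteq> \<sigma> ! i"
          using p(2) False \<open>distinct \<sigma>\<close> ijl(1) \<open>j < n\<close> by (simp add: n_def nth_eq_iff_index_eq)
        then have "\<sigma> ! (s + q) < \<sigma> ! i"
          using p(3) \<sigma>i by simp
        have "j \<noteq> s + q"
          using \<sigma>j p(3) by blast
        then consider "j < s + q" | "s + q < j"
          by linarith
        then show False
        proof cases
          case 1
          then show False
            using avoids ijl(1) \<sigma>j p \<open>\<sigma> ! (s + q) < \<sigma> ! i\<close> by (auto simp: avoids_312_def n_def)
        next
          case 2
          have "x < \<tau> ! (s + q)"
            using p by (simp add: \<tau>_nth less_bump_iff)
          then show False
            using no_312_ending_in_window 2 p \<open>j < n\<close> \<tau>j by blast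
        qed
      qed
    qed
  qed
qed

subsection \<open>Realising walks\<close>

lemma exists_append_value_window:
  assumes "is_perm \<sigma>" "length \<sigma> = n" "is_perm e" "length e = k" "1 \<le> k" "k \<le> n"
    and overlap: "std (drop (Suc n - k) \<sigma>) = std (take (k - 1) e)"
  obtains x where "1 \<le> x" "x \<le> Suc n" "x \<in> set (drop (Suc n - k) \<sigma>) \<or> (\<forall>y\<in>set \<sigma>. y < x)"
    "order_isomorphic (drop (Suc n - k) (append_value x \<sigma>)) e"
proof -
  define v where "v = drop (Suc n - k) \<sigma>"
  define u where "u = take (k - 1) e"
  define c where "c = e ! (k - 1)"
  have e_split: "e = u @ [c]"
    using take_Suc_conv_app_nth[of "k - 1" e] assms(4,5) by (simp add: u_def c_def)
  have v_range: "set v \<subseteq> {1..n}"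
    using set_drop_subset[of _ \<sigma>] assms(1,2) by (auto simp: v_def is_perm_def)
  then have "set v \<subseteq> {..n}"
    by auto
  have iso: "order_isomorphic v u"
    using overlap by (simp add: std_eq_imp_order_isomorphic u_def v_def)
  obtain x where x: "x \<in> insert (Suc n) (set v)"
    and threshold: "\<forall>j<length v. x \<le> v ! j \<longleftrightarrow> c < u ! j"
    using exists_threshold[OF iso \<open>set v \<subseteq> {..n}\<close>, of c] by blast
  have "c \<notin> set u"
    using \<open>is_perm e\<close> e_split by (auto simp: is_perm_def)
  moreover have "drop (Suc n - k) (append_value x \<sigma>) = map (bump x) v @ [x]"
    using assms(2,5) by (simp add: append_value_def v_def drop_map)
  ultimately have "order_isomorphic (drop (Suc n - k) (append_value x \<sigma>)) e"
    using order_isomorphic_append_value[OF iso _ threshold] e_split by simp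
  moreover have "1 \<le> x" "x \<le> Suc n"
    using x v_range by auto
  moreover have "x \<in> set (drop (Suc n - k) \<sigma>) \<or> (\<forall>y\<in>set \<sigma>. y < x)"
    using x assms(1,2) by (auto simp: v_def is_perm_def)
  ultimately show ?thesis
    using that by blast
qed

lemma extend_312_avoider:
  assumes \<sigma>: "\<sigma> \<in> Av n {[3, 1, 2]}" and e: "e \<in> Av k {[3, 1, 2]}" and "1 \<le> k" "k \<le> n"
    and overlap: "ov_end k (last (W k \<sigma>)) = ov_start k e"
  shows "\<exists>\<tau> \<in> Av (Suc n) {[3, 1, 2]}. W k \<tau> = W k \<sigma> @ [e]"
proof -
  have "length \<sigma> = n" "is_perm \<sigma>" "avoids_312 \<sigma>" "length e = k" "is_perm e" "avoids_312 e"
    using \<sigma> e unfolding Av_312_iff by blast+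
  define s where "s = Suc n - k"
  have "ov_end k (last (W k \<sigma>)) = std (drop 1 (drop (n - k) \<sigma>))"
    using \<open>k \<le> n\<close> \<open>length \<sigma> = n\<close> by (simp add: last_W ov_end_eq std_drop_std)
  then have "std (drop (Suc n - k) \<sigma>) = std (take (k - 1) e)"
    using overlap \<open>k \<le> n\<close> by (simp add: ov_start_eq Suc_diff_le)
  then obtain x where x: "1 \<le> x" "x \<le> Suc n" "x \<in> set (drop s \<sigma>) \<or> (\<forall>y\<in>set \<sigma>. y < x)"
    and iso_window: "order_isomorphic (drop s (append_value x \<sigma>)) e"
    using exists_append_value_window[OF \<open>is_perm \<sigma>\<close> \<open>length \<sigma> = n\<close> \<open>is_perm e\<close> \<open>length e = k\<close>
        \<open>1 \<le> k\<close> \<open>k \<le> n\<close>]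
    unfolding s_def by blast
  define \<tau> where "\<tau> = append_value x \<sigma>"
  have "is_perm \<tau>" "length \<tau> = Suc n"
    using is_perm_append_value \<open>is_perm \<sigma>\<close> \<open>length \<sigma> = n\<close> x(1,2)
    by (simp_all add: \<tau>_def append_value_def)
  have "std (drop s \<tau>) = std e"
    using order_isomorphic_imp_std_eq iso_window \<open>is_perm \<tau>\<close> by (simp add: \<tau>_def is_perm_def)
  then have "W k \<tau> = W k \<sigma> @ [e]"
    using \<open>length \<sigma> = n\<close> \<open>k \<le> n\<close> std_is_perm[OF \<open>is_perm e\<close>]
    by (simp add: \<tau>_def append_value_def W_snoc W_map_strict_mono[OF strict_mono_bump] s_def)
  moreover have "avoids_312 \<tau>"
    unfolding \<tau>_def
  proof (rule avoids_312_append_value)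
    show "avoids_312 (drop s (append_value x \<sigma>))"
      using avoids_312_order_isomorphic[OF order_isomorphic_sym[OF iso_window] \<open>avoids_312 e\<close>] .
    show "distinct \<sigma>"
      using \<open>is_perm \<sigma>\<close> by (simp add: is_perm_def)
  qed fact+
  ultimately have "\<tau> \<in> Av (Suc n) {[3, 1, 2]} \<and> W k \<tau> = W k \<sigma> @ [e]"
    using \<open>is_perm \<tau>\<close> \<open>length \<tau> = Suc n\<close> unfolding Av_312_iff by blast
  then show ?thesis
    by blast
qed

lemma snoc_in_ov_walksD:
  assumes "w @ [e] \<in> ov_walks k B (Suc (Suc s))"
  shows "w \<in> ov_walks k B (Suc s)" "e \<in> Av k B" "ov_end k (last w) = ov_start k e"
proof -
  have "length w = Suc s"
    using assms by (simp add: ov_walks_def)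
  then have "last w = w ! s"
    by (cases w rule: rev_cases) (simp_all add: nth_append)
  moreover have "(w @ [e]) ! i = w ! i" if "i < Suc s" for i
    using that \<open>length w = Suc s\<close> by (simp add: nth_append)
  moreover have "(w @ [e]) ! Suc s = e"
    using nth_append_length[of w e] \<open>length w = Suc s\<close> by simp
  ultimately show "w \<in> ov_walks k B (Suc s)" "e \<in> Av k B" "ov_end k (last w) = ov_start k e"
    using assms \<open>length w = Suc s\<close> unfolding ov_walks_def by (auto simp: Suc_lessI)
qed

lemma ov_walk_realised_by_312_avoider:
  assumes "1 \<le> k" "w \<in> ov_walks k {[3, 1, 2]} (Suc t)"
  shows "\<exists>\<sigma> \<in> Av (t + k) {[3, 1, 2]}. W k \<sigma> = w"
  using assms(2)
proof (induction t arbitrary: w)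
  case 0
  then obtain e where "w = [e]" "e \<in> Av k {[3, 1, 2]}"
    by (auto simp: ov_walks_def length_Suc_conv)
  moreover have "W k e = [e]"
    using \<open>e \<in> Av k {[3, 1, 2]}\<close> unfolding Av_312_iff by (simp add: W_length_eq std_is_perm)
  ultimately show ?case
    by auto
next
  case (Suc t)
  obtain w' e where w: "w = w' @ [e]"
    using Suc.prems by (cases w rule: rev_cases) (auto simp: ov_walks_def)
  note walk = snoc_in_ov_walksD[OF Suc.prems[unfolded w]]
  obtain \<sigma> where \<sigma>: "\<sigma> \<in> Av (t + k) {[3, 1, 2]}" and "W k \<sigma> = w'"
    using Suc.IH[OF walk(1)] by blast
  then show ?case
    using extend_312_avoider[OF \<sigma> walk(2) \<open>1 \<le> k\<close>] walk(3) w by auto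
qed

theorem mainTheorem4:
  fixes k m :: nat
  assumes "k \<ge> 1" and "m \<ge> k"
  shows "\<forall>w \<in> ov_walks k {[3,1,2]} (m - k + 1). \<exists>\<sigma> \<in> Av m {[3,1,2]}. W k \<sigma> = w"
proof -
  have "m - k + 1 = Suc (m - k)" "m - k + k = m"
    using assms by auto
  then show ?thesis
    using ov_walk_realised_by_312_avoider[OF assms(1), of _ "m - k"] by simp
qed

end
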